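(* Let $D$ be a division algebra, $\sigma\in\mathrm{Aut}(D)$, and suppose $F=\mathcal{Z}(D)\cap D_\sigma$ is infinite. Let $f\in D[t_1,\ldots,t_d;\sigma]$ be a nonzero skew polynomial. Then there exist $a\in D$ and $a_1,\ldots,a_{d-1}\in F$ such that the polynomial $g=a\cdot f(t_1+a_1t_d,\ldots,t_{d-1}+a_{d-1}t_d,t_d)$ is a monic polynomial in $t_d$ with coefficients in $D[t_1,\ldots,t_{d-1};\sigma]$.
   Context: $\mathcal{Z}(D)$ is the center of $D$ and $D_\sigma=\{r\in D:\sigma(r)=r\}$. $D[t_1,\ldots,t_d;\sigma]$ denotes the skew polynomial ring in pairwise commuting variables with $t_ir=\sigma(r)t_i$ for all $r\in D$ and all $i$; it is identified with $D[t_1,\ldots,t_{d-1};\sigma][t_d;\sigma]$, where $\sigma$ is extended by $\sigma(t_i)=t_i$. For $a_1,\ldots,a_{d-1}\in F$, $f(t_1+a_1t_d,\ldots,t_{d-1}+a_{d-1}t_d,t_d)$ denotes the image of $f$ under the unique ring endomorphism of $D[t_1,\ldots,t_d;\sigma]$ fixing $D$ pointwise and sending $t_i\mapsto t_i+a_it_d$ for $i<d$ and $t_d\mapsto t_d$. Monic in $t_d$ means that, written as $\sum_j c_jt_d^j$ with $c_j\in D[t_1,\ldots,t_{d-1};\sigma]$, its leading coefficient is $1$. *)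

theory Defs
  imports Main
begin

text \<open>Skew polynomials in d pairwise commuting variables t_0,...,t_{d-1} over a division
ring 'a, with t_i r = sigma(r) t_i.  A skew polynomial is represented by its coefficient
function: monomials are exponent vectors alpha :: nat => nat (with alpha i = 0 for i >= d),
and p alpha is the (left) coefficient c in c t^alpha.  The paper's variable t_k is our
index k-1; in particular t_d is index d-1.\<close>

definition skpolys :: "nat \<Rightarrow> ((nat \<Rightarrow> nat) \<Rightarrow> 'a::zero) set" where
  "skpolys d = {p. finite {\<alpha>. p \<alpha> \<noteq> 0} \<and> (\<forall>\<alpha>. p \<alpha> \<noteq> 0 \<longrightarrow> (\<forall>i\<ge>d. \<alpha> i = 0))}"

definition skp_zero :: "(nat \<Rightarrow> nat) \<Rightarrow> 'a::zero" where
  "skp_zero = (\<lambda>_. 0)"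

definition skp_const :: "'a::zero \<Rightarrow> (nat \<Rightarrow> nat) \<Rightarrow> 'a" where
  "skp_const r = (\<lambda>\<alpha>. if \<alpha> = (\<lambda>_. 0) then r else 0)"

definition skp_var :: "nat \<Rightarrow> (nat \<Rightarrow> nat) \<Rightarrow> 'a::{zero,one}" where
  "skp_var i = (\<lambda>\<alpha>. if \<alpha> = (\<lambda>j. if j = i then 1 else 0) then 1 else 0)"

definition skp_add :: "((nat \<Rightarrow> nat) \<Rightarrow> 'a::plus) \<Rightarrow> ((nat \<Rightarrow> nat) \<Rightarrow> 'a) \<Rightarrow> (nat \<Rightarrow> nat) \<Rightarrow> 'a" where
  "skp_add p q = (\<lambda>\<alpha>. p \<alpha> + q \<alpha>)"

definition mdeg :: "nat \<Rightarrow> (nat \<Rightarrow> nat) \<Rightarrow> nat" where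
  "mdeg d \<alpha> = (\<Sum>i<d. \<alpha> i)"

text \<open>(c t^alpha)(e t^beta) = c sigma^{|alpha|}(e) t^{alpha+beta}\<close>
definition skp_mult :: "('a::ring_1 \<Rightarrow> 'a) \<Rightarrow> nat \<Rightarrow> ((nat \<Rightarrow> nat) \<Rightarrow> 'a) \<Rightarrow> ((nat \<Rightarrow> nat) \<Rightarrow> 'a) \<Rightarrow> (nat \<Rightarrow> nat) \<Rightarrow> 'a" where
  "skp_mult \<sigma> d p q = (\<lambda>\<gamma>. \<Sum>\<alpha>\<in>{\<alpha>. p \<alpha> \<noteq> 0 \<and> (\<forall>i. \<alpha> i \<le> \<gamma> i)}.
      p \<alpha> * (\<sigma> ^^ mdeg d \<alpha>) (q (\<lambda>i. \<gamma> i - \<alpha> i)))"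

definition ring_aut :: "('a::ring_1 \<Rightarrow> 'a) \<Rightarrow> bool" where
  "ring_aut \<sigma> \<longleftrightarrow> bij \<sigma> \<and> (\<forall>x y. \<sigma> (x + y) = \<sigma> x + \<sigma> y) \<and> (\<forall>x y. \<sigma> (x * y) = \<sigma> x * \<sigma> y)
     \<and> \<sigma> 1 = 1"

definition centre_fixed :: "('a::ring_1 \<Rightarrow> 'a) \<Rightarrow> 'a set" where
  "centre_fixed \<sigma> = {x. (\<forall>y. x * y = y * x)} \<inter> {x. \<sigma> x = x}"

text \<open>phi is a ring endomorphism of D[t_1..t_d;sigma] fixing D pointwise and sending
t_i to t_i + a_i t_d (i < d) and t_d to t_d.  (Such phi is unique when it exists.)\<close>
definition skp_subst_hom :: "('a::ring_1 \<Rightarrow> 'a) \<Rightarrow> nat \<Rightarrow> (nat \<Rightarrow> 'a)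
    \<Rightarrow> (((nat \<Rightarrow> nat) \<Rightarrow> 'a) \<Rightarrow> ((nat \<Rightarrow> nat) \<Rightarrow> 'a)) \<Rightarrow> bool" where
  "skp_subst_hom \<sigma> d as \<phi> \<longleftrightarrow>
     (\<forall>p\<in>skpolys d. \<phi> p \<in> skpolys d)
   \<and> (\<forall>p\<in>skpolys d. \<forall>q\<in>skpolys d. \<phi> (skp_add p q) = skp_add (\<phi> p) (\<phi> q))
   \<and> (\<forall>p\<in>skpolys d. \<forall>q\<in>skpolys d. \<phi> (skp_mult \<sigma> d p q) = skp_mult \<sigma> d (\<phi> p) (\<phi> q))
   \<and> (\<forall>r. \<phi> (skp_const r) = skp_const r)
   \<and> (\<forall>i<d - 1. \<phi> (skp_var i) = skp_add (skp_var i) (skp_mult \<sigma> d (skp_const (as i)) (skp_var (d - 1))))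
   \<and> \<phi> (skp_var (d - 1)) = skp_var (d - 1)"

definition deg_in :: "((nat \<Rightarrow> nat) \<Rightarrow> 'a::zero) \<Rightarrow> nat \<Rightarrow> nat" where
  "deg_in p i = Max {\<alpha> i | \<alpha>. p \<alpha> \<noteq> 0}"

text \<open>p = sum_j c_j t_d^j with c_j in D[t_1..t_{d-1};sigma] and leading coefficient c_n = 1\<close>
definition monic_in_last :: "nat \<Rightarrow> ((nat \<Rightarrow> nat) \<Rightarrow> 'a::{zero,one}) \<Rightarrow> bool" where
  "monic_in_last d p \<longleftrightarrow> p \<noteq> skp_zero \<and>
     (\<forall>\<alpha>. \<alpha> (d - 1) = deg_in p (d - 1) \<longrightarrow>
        p \<alpha> = (if (\<forall>j. j \<noteq> d - 1 \<longrightarrow> \<alpha> j = 0) then 1 else 0))"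

end

(* Choose b_1, ..., b_{d-1} in F and substitute t_i := t_i + b_i t_d. Since the b_i are central
   and fixed by sigma, this substitution is a ring endomorphism: it is the composite of the
   substitutions of one variable at a time, each of which is given on monomials by the binomial
   theorem. It preserves the total degree, and if m is the total degree of f, the coefficient
   of the pure power t_d^m in the image of f is the value at (b_1, ..., b_{d-1}) of the
   homogeneous component of degree m of f, read as a polynomial in commuting variables with
   coefficients in D. That value is nonzero for a suitable choice of the b_i, because a nonzero
   polynomial of this kind cannot vanish on all of F^(d-1) when F is an infinite set of central
   elements. No monomial other than t_d^m has degree >= m in t_d, so multiplying by the inverse of
   that coefficient makes the image monic in t_d. *)

theory Submission
  imports Defs "HOL-Library.Function_Algebras"
begin

section \<open>Coefficient functions\<close>

lemma sum_fun_apply: "(\<Sum>x\<in>A. f x) y = (\<Sum>x\<in>A. f x y)"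
  by (induction A rule: infinite_finite_induct) auto

definition supp :: "((nat \<Rightarrow> nat) \<Rightarrow> 'a::zero) \<Rightarrow> (nat \<Rightarrow> nat) set" where
  "supp p = {\<alpha>. p \<alpha> \<noteq> 0}"

definition skp_monom :: "'a::zero \<Rightarrow> (nat \<Rightarrow> nat) \<Rightarrow> (nat \<Rightarrow> nat) \<Rightarrow> 'a" where
  "skp_monom c \<alpha> = (\<lambda>\<gamma>. if \<gamma> = \<alpha> then c else 0)"

definition lin_ext :: "('a::zero \<Rightarrow> (nat \<Rightarrow> nat) \<Rightarrow> 'b::comm_monoid_add) \<Rightarrow> ((nat \<Rightarrow> nat) \<Rightarrow> 'a) \<Rightarrow> 'b" where
  "lin_ext G p = (\<Sum>\<alpha>\<in>supp p. G (p \<alpha>) \<alpha>)"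

lemma supp_add: "supp (p + q) \<subseteq> supp p \<union> supp (q :: (nat \<Rightarrow> nat) \<Rightarrow> 'a::monoid_add)"
  by (auto simp: supp_def)

lemma finite_supp_add:
  "finite (supp p) \<Longrightarrow> finite (supp q) \<Longrightarrow> finite (supp (p + (q :: (nat \<Rightarrow> nat) \<Rightarrow> 'a::monoid_add)))"
  using supp_add finite_subset by blast

lemma supp_0 [simp]: "supp 0 = {}"
  by (simp add: supp_def)

lemma finite_supp_sum:
  "(\<And>x. x \<in> A \<Longrightarrow> finite (supp (h x))) \<Longrightarrow>
   finite (supp (\<Sum>x\<in>A. h x :: (nat \<Rightarrow> nat) \<Rightarrow> 'a::comm_monoid_add))"
  by (induction A rule: infinite_finite_induct) (auto intro: finite_supp_add)

lemma supp_skp_monom: "supp (skp_monom c \<alpha>) = (if c = 0 then {} else {\<alpha>})"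
  by (auto simp: supp_def skp_monom_def)

lemma finite_supp_skp_monom [simp]: "finite (supp (skp_monom c \<alpha>))"
  by (simp add: supp_skp_monom)

lemma skp_monom_add: "skp_monom (c + e) \<alpha> = skp_monom c \<alpha> + skp_monom (e::'a::monoid_add) \<alpha>"
  by (rule ext) (simp add: skp_monom_def)

lemma skp_monom_0 [simp]: "skp_monom 0 \<alpha> = 0"
  by (auto simp: skp_monom_def)

lemma skp_monom_decomp: "finite (supp p) \<Longrightarrow> p = (\<Sum>\<alpha>\<in>supp p. skp_monom (p \<alpha>) \<alpha>)"
  by (rule ext) (auto simp: sum_fun_apply skp_monom_def supp_def)

lemma lin_ext_eq_sum_superset:
  assumes "finite S" "supp p \<subseteq> S" "\<And>\<alpha>. G 0 \<alpha> = 0"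
  shows "lin_ext G p = (\<Sum>\<alpha>\<in>S. G (p \<alpha>) \<alpha>)"
  unfolding lin_ext_def
  by (rule sum.mono_neutral_left) (use assms in \<open>auto simp: supp_def\<close>)

lemma lin_ext_0 [simp]: "lin_ext G 0 = 0"
  by (simp add: lin_ext_def supp_def)

lemma lin_ext_skp_monom: "G 0 \<alpha> = 0 \<Longrightarrow> lin_ext G (skp_monom c \<alpha>) = G c \<alpha>"
  by (cases "c = 0") (auto simp: lin_ext_def supp_skp_monom supp_def, auto simp: skp_monom_def)

lemma lin_ext_add:
  fixes p q :: "(nat \<Rightarrow> nat) \<Rightarrow> 'a::monoid_add"
  assumes "finite (supp p)" "finite (supp q)"
    and "\<And>\<alpha>. G 0 \<alpha> = 0" "\<And>c e \<alpha>. G (c + e) \<alpha> = G c \<alpha> + G e \<alpha>"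
  shows "lin_ext G (p + q) = lin_ext G p + lin_ext G q"
proof -
  let ?S = "supp p \<union> supp q"
  have S: "finite ?S" using assms by auto
  have "lin_ext G (p + q) = (\<Sum>\<alpha>\<in>?S. G ((p + q) \<alpha>) \<alpha>)"
    by (rule lin_ext_eq_sum_superset) (use S supp_add[of p q] assms(3) in auto)
  also have "\<dots> = (\<Sum>\<alpha>\<in>?S. G (p \<alpha>) \<alpha>) + (\<Sum>\<alpha>\<in>?S. G (q \<alpha>) \<alpha>)"
    by (simp add: assms(4) sum.distrib)
  also have "\<dots> = lin_ext G p + lin_ext G q"
    using lin_ext_eq_sum_superset[OF S, of p G] lin_ext_eq_sum_superset[OF S, of q G] assms(3)
    by auto
  finally show ?thesis .
qed

lemma lin_ext_sum:
  fixes h :: "'c \<Rightarrow> (nat \<Rightarrow> nat) \<Rightarrow> 'a::comm_monoid_add"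
  assumes "\<And>x. x \<in> A \<Longrightarrow> finite (supp (h x))"
    and "\<And>\<alpha>. G 0 \<alpha> = 0" "\<And>c e \<alpha>. G (c + e) \<alpha> = G c \<alpha> + G e \<alpha>"
  shows "lin_ext G (\<Sum>x\<in>A. h x) = (\<Sum>x\<in>A. lin_ext G (h x))"
  using assms(1)
proof (induction A rule: infinite_finite_induct)
  case (insert x A)
  then show ?case
    by (simp only: sum.insert[OF insert(1,2)])
       (subst lin_ext_add, auto intro: finite_supp_sum simp: assms(2,3))
qed auto

definition in_vars :: "nat \<Rightarrow> (nat \<Rightarrow> nat) \<Rightarrow> bool" where
  "in_vars d \<alpha> \<longleftrightarrow> (\<forall>i\<ge>d. \<alpha> i = 0)"

definition unit_exp :: "nat \<Rightarrow> nat \<Rightarrow> nat" where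
  "unit_exp i = (\<lambda>j. if j = i then 1 else 0)"

lemma in_vars_unit_exp: "i < d \<Longrightarrow> in_vars d (unit_exp i)"
  by (auto simp: in_vars_def unit_exp_def)

lemma skpolys_iff: "p \<in> skpolys d \<longleftrightarrow> finite (supp p) \<and> (\<forall>\<alpha>\<in>supp p. in_vars d \<alpha>)"
  by (auto simp: skpolys_def supp_def in_vars_def)

lemma skpolys_add: "p \<in> skpolys d \<Longrightarrow> q \<in> skpolys d \<Longrightarrow> p + (q :: _ \<Rightarrow> 'a::monoid_add) \<in> skpolys d"
  unfolding skpolys_iff using supp_add[of p q] by (auto intro: finite_supp_add)

lemma skpolys_0 [simp]: "0 \<in> skpolys d"
  by (simp add: skpolys_iff)

lemma skpolys_sum:
  "(\<And>x. x \<in> A \<Longrightarrow> h x \<in> skpolys d) \<Longrightarrow> (\<Sum>x\<in>A. h x :: _ \<Rightarrow> 'a::comm_monoid_add) \<in> skpolys d"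
  by (induction A rule: infinite_finite_induct) (auto intro: skpolys_add)

lemma skpolys_skp_monom: "in_vars d \<alpha> \<Longrightarrow> skp_monom c \<alpha> \<in> skpolys d"
  by (auto simp: skpolys_iff supp_skp_monom)

lemma skp_const_eq_monom: "skp_const r = skp_monom r (\<lambda>_. 0)"
  by (simp add: skp_const_def skp_monom_def)

lemma skp_var_eq_monom: "skp_var i = skp_monom 1 (unit_exp i)"
  by (simp add: skp_var_def skp_monom_def unit_exp_def)

lemma skp_add_eq_plus: "skp_add p q = p + q"
  by (simp add: skp_add_def plus_fun_def)

definition central :: "'a::ring_1 \<Rightarrow> bool" where
  "central x \<longleftrightarrow> (\<forall>y. x * y = y * x)"

lemma central_commute: "central x \<Longrightarrow> x * y = y * x"
  by (simp add: central_def)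

lemma central_0 [simp]: "central 0" and central_1 [simp]: "central 1"
  by (simp_all add: central_def)

lemma central_mult: "central x \<Longrightarrow> central y \<Longrightarrow> central (x * y)"
  unfolding central_def by (metis mult.assoc)

lemma central_power: "central x \<Longrightarrow> central (x ^ n)"
  by (induction n) (auto intro: central_mult)

lemma central_of_nat: "central (of_nat n)"
  by (simp add: central_def mult_of_nat_commute)

lemma centre_fixed_iff: "x \<in> centre_fixed \<sigma> \<longleftrightarrow> central x \<and> \<sigma> x = x"
  by (simp add: centre_fixed_def central_def)

section \<open>The multiplication of skew polynomials\<close>

locale skew_poly_ring =
  fixes \<sigma> :: "'a::division_ring \<Rightarrow> 'a" and d :: nat
  assumes aut: "ring_aut \<sigma>"
begin

lemma sigma_add: "\<sigma> (x + y) = \<sigma> x + \<sigma> y"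
  and sigma_mult: "\<sigma> (x * y) = \<sigma> x * \<sigma> y"
  and sigma_1: "\<sigma> 1 = 1"
  using aut by (simp_all add: ring_aut_def)

lemma sigma_pow_add: "(\<sigma> ^^ n) (x + y) = (\<sigma> ^^ n) x + (\<sigma> ^^ n) y"
  by (induction n) (auto simp: sigma_add)

lemma sigma_pow_mult: "(\<sigma> ^^ n) (x * y) = (\<sigma> ^^ n) x * (\<sigma> ^^ n) y"
  by (induction n) (auto simp: sigma_mult)

lemma sigma_0: "\<sigma> 0 = 0"
  using sigma_add[of 0 0] by simp

lemma sigma_pow_0 [simp]: "(\<sigma> ^^ n) 0 = 0"
  by (induction n) (auto simp: sigma_0)

lemma sigma_pow_fixed: "\<sigma> x = x \<Longrightarrow> (\<sigma> ^^ n) x = x"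
  by (induction n) auto

lemma sigma_of_nat: "\<sigma> (of_nat k) = of_nat k"
  by (induction k) (auto simp: sigma_add sigma_1 sigma_0)

lemma sigma_power_fixed: "\<sigma> a = a \<Longrightarrow> \<sigma> (a ^ n) = a ^ n"
  by (induction n) (auto simp: sigma_mult sigma_1)

lemma skp_mult_eq_sum_superset:
  assumes "finite S" "supp p \<subseteq> S"
  shows "skp_mult \<sigma> d p q \<gamma> =
    (\<Sum>\<alpha>\<in>S. if \<forall>i. \<alpha> i \<le> \<gamma> i then p \<alpha> * (\<sigma> ^^ mdeg d \<alpha>) (q (\<lambda>i. \<gamma> i - \<alpha> i)) else 0)"
proof -
  have "(\<Sum>\<alpha>\<in>S. if \<forall>i. \<alpha> i \<le> \<gamma> i then p \<alpha> * (\<sigma> ^^ mdeg d \<alpha>) (q (\<lambda>i. \<gamma> i - \<alpha> i)) else 0)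
     = (\<Sum>\<alpha>\<in>{\<alpha>\<in>S. \<forall>i. \<alpha> i \<le> \<gamma> i}. p \<alpha> * (\<sigma> ^^ mdeg d \<alpha>) (q (\<lambda>i. \<gamma> i - \<alpha> i)))"
    by (simp add: sum.inter_filter[OF assms(1)])
  also have "\<dots> = skp_mult \<sigma> d p q \<gamma>"
    unfolding skp_mult_def by (rule sum.mono_neutral_right) (use assms in \<open>auto simp: supp_def\<close>)
  finally show ?thesis ..
qed

lemma skp_mult_add_left:
  assumes "finite (supp p)" "finite (supp p')"
  shows "skp_mult \<sigma> d (p + p') q = skp_mult \<sigma> d p q + skp_mult \<sigma> d p' q"
proof (rule ext)
  fix \<gamma>
  let ?S = "supp p \<union> supp p'"
  have S: "finite ?S" using assms by simp
  show "skp_mult \<sigma> d (p + p') q \<gamma> = (skp_mult \<sigma> d p q + skp_mult \<sigma> d p' q) \<gamma>"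
    unfolding plus_fun_apply using supp_add[of p p']
    by (subst (1 2 3) skp_mult_eq_sum_superset[OF S])
       (auto simp: sum.distrib[symmetric] distrib_right supp_def intro!: sum.cong)
qed

lemma skp_mult_add_right: "skp_mult \<sigma> d p (q + q') = skp_mult \<sigma> d p q + skp_mult \<sigma> d p q'"
  by (rule ext) (simp add: skp_mult_def sigma_pow_add distrib_left sum.distrib)

lemma skp_mult_sum_left:
  assumes "\<And>x. x \<in> A \<Longrightarrow> finite (supp (h x))"
  shows "skp_mult \<sigma> d (\<Sum>x\<in>A. h x) q = (\<Sum>x\<in>A. skp_mult \<sigma> d (h x) q)"
  using assms
proof (induction A rule: infinite_finite_induct)
  case (insert x A)
  then show ?case
    by (simp only: sum.insert[OF insert(1,2)])
       (subst skp_mult_add_left, auto intro: finite_supp_sum)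
qed (auto simp: skp_mult_def fun_eq_iff)

lemma skp_mult_sum_right: "skp_mult \<sigma> d p (\<Sum>x\<in>A. h x) = (\<Sum>x\<in>A. skp_mult \<sigma> d p (h x))"
proof (induction A rule: infinite_finite_induct)
  case (insert x A)
  then show ?case by (simp only: sum.insert[OF insert(1,2)] skp_mult_add_right)
qed (auto simp: skp_mult_def fun_eq_iff)

lemma skp_mult_monom:
  "skp_mult \<sigma> d (skp_monom c \<alpha>) (skp_monom e \<beta>) =
   skp_monom (c * (\<sigma> ^^ mdeg d \<alpha>) e) (\<lambda>i. \<alpha> i + \<beta> i)"
proof (rule ext)
  fix \<gamma>
  have diff: "(\<lambda>i. \<gamma> i - \<alpha> i) = \<beta> \<longleftrightarrow> \<gamma> = (\<lambda>i. \<alpha> i + \<beta> i)" if "\<forall>i. \<alpha> i \<le> \<gamma> i"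
    using that by (auto simp: fun_eq_iff) (metis add_diff_inverse_nat not_le)
  have "skp_mult \<sigma> d (skp_monom c \<alpha>) (skp_monom e \<beta>) \<gamma> =
     (if \<forall>i. \<alpha> i \<le> \<gamma> i then c * (\<sigma> ^^ mdeg d \<alpha>) (skp_monom e \<beta> (\<lambda>i. \<gamma> i - \<alpha> i)) else 0)"
    by (subst skp_mult_eq_sum_superset[of "{\<alpha>}"]) (simp_all add: supp_skp_monom, simp add: skp_monom_def)
  then show "skp_mult \<sigma> d (skp_monom c \<alpha>) (skp_monom e \<beta>) \<gamma> =
      skp_monom (c * (\<sigma> ^^ mdeg d \<alpha>) e) (\<lambda>i. \<alpha> i + \<beta> i) \<gamma>"
    using diff by (auto simp: skp_monom_def)
qed

lemma skp_mult_const: "skp_mult \<sigma> d (skp_const a) p = (\<lambda>\<gamma>. a * p \<gamma>)"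
  unfolding skp_const_eq_monom
  by (rule ext) (subst skp_mult_eq_sum_superset[of "{\<lambda>_. 0}"],
      simp_all add: supp_skp_monom, simp add: skp_monom_def mdeg_def)

lemma lin_ext_mult:
  assumes G0: "\<And>\<alpha>. G 0 \<alpha> = 0"
    and G_add: "\<And>c e \<alpha>. G (c + e) \<alpha> = G c \<alpha> + G e \<alpha>"
    and G_finite: "\<And>c \<alpha>. finite (supp (G c \<alpha>))"
    and G_mult: "\<And>c e \<alpha> \<beta>. in_vars d \<alpha> \<Longrightarrow> in_vars d \<beta> \<Longrightarrow>
        skp_mult \<sigma> d (G c \<alpha>) (G e \<beta>) = G (c * (\<sigma> ^^ mdeg d \<alpha>) e) (\<lambda>i. \<alpha> i + \<beta> i)"
    and p: "p \<in> skpolys d" and q: "q \<in> skpolys d"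
  shows "lin_ext G (skp_mult \<sigma> d p q) = skp_mult \<sigma> d (lin_ext G p) (lin_ext G q)"
proof -
  have fp: "finite (supp p)" and fq: "finite (supp q)"
    and vp: "\<And>\<alpha>. \<alpha> \<in> supp p \<Longrightarrow> in_vars d \<alpha>" and vq: "\<And>\<beta>. \<beta> \<in> supp q \<Longrightarrow> in_vars d \<beta>"
    using p q by (auto simp: skpolys_iff)
  have "skp_mult \<sigma> d p q =
      skp_mult \<sigma> d (\<Sum>\<alpha>\<in>supp p. skp_monom (p \<alpha>) \<alpha>) (\<Sum>\<beta>\<in>supp q. skp_monom (q \<beta>) \<beta>)"
    using skp_monom_decomp[OF fp] skp_monom_decomp[OF fq] by simp
  also have "\<dots> = (\<Sum>\<alpha>\<in>supp p. \<Sum>\<beta>\<in>supp q. skp_monom (p \<alpha> * (\<sigma> ^^ mdeg d \<alpha>) (q \<beta>)) (\<lambda>i. \<alpha> i + \<beta> i))"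
    by (simp add: skp_mult_sum_left skp_mult_sum_right skp_mult_monom, rule sum.swap)
  finally have "lin_ext G (skp_mult \<sigma> d p q) =
      (\<Sum>\<alpha>\<in>supp p. \<Sum>\<beta>\<in>supp q. G (p \<alpha> * (\<sigma> ^^ mdeg d \<alpha>) (q \<beta>)) (\<lambda>i. \<alpha> i + \<beta> i))"
    by (simp add: lin_ext_sum finite_supp_sum G0 G_add lin_ext_skp_monom)
  also have "\<dots> = (\<Sum>\<alpha>\<in>supp p. \<Sum>\<beta>\<in>supp q. skp_mult \<sigma> d (G (p \<alpha>) \<alpha>) (G (q \<beta>) \<beta>))"
    using vp vq by (simp add: G_mult)
  also have "\<dots> = skp_mult \<sigma> d (lin_ext G p) (lin_ext G q)"
    by (simp add: lin_ext_def skp_mult_sum_left skp_mult_sum_right G_finite, rule sum.swap)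
  finally show ?thesis .
qed

end

section \<open>The elementary substitution \<open>t\<^sub>i := t\<^sub>i + a t\<^sub>d\<close>\<close>

lemma sum_choose_regroup:
  fixes H :: "nat \<Rightarrow> nat \<Rightarrow> 'b::comm_monoid_add"
  assumes H0: "\<And>k. H k 0 = 0" and H_add: "\<And>k x y. H k (x + y) = H k x + H k y"
  shows "(\<Sum>j\<le>A. \<Sum>l\<le>B. H (j + l) ((A choose j) * (B choose l))) = (\<Sum>k\<le>A + B. H k ((A + B) choose k))"
proof -
  let ?g = "\<lambda>j l. H (j + l) ((A choose j) * (B choose l))"
  have "(\<Sum>j\<le>A. \<Sum>l\<le>B. ?g j l) = (\<Sum>(j, l)\<in>{..A} \<times> {..B}. ?g j l)"
    by (rule sum.cartesian_product)
  also have "\<dots> = (\<Sum>(j, l)\<in>{(j, l). j + l \<le> A + B}. ?g j l)"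
  proof (rule sum.mono_neutral_left)
    show "finite {(j, l). j + l \<le> A + B}"
      by (rule finite_subset[of _ "{..A + B} \<times> {..A + B}"]) auto
    have "?g j l = 0" if "\<not> (j \<le> A \<and> l \<le> B)" for j l
      using that by (cases "j \<le> A") (simp_all add: not_le binomial_eq_0 H0)
    then show "\<forall>x\<in>{(j, l). j + l \<le> A + B} - {..A} \<times> {..B}. (case x of (j, l) \<Rightarrow> ?g j l) = 0"
      by auto
  qed auto
  also have "\<dots> = (\<Sum>k\<le>A + B. \<Sum>j\<le>k. H k ((A choose j) * (B choose (k - j))))"
    by (subst sum.triangle_reindex_eq) (auto intro!: sum.cong)
  also have "\<dots> = (\<Sum>k\<le>A + B. H k (\<Sum>j\<le>k. (A choose j) * (B choose (k - j))))"
    by (intro sum.cong refl) (rule sum_comp_morphism[of "H k" for k, OF H0 H_add, unfolded o_def])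
  also have "\<dots> = (\<Sum>k\<le>A + B. H k ((A + B) choose k))"
    by (simp add: vandermonde)
  finally show ?thesis .
qed

lemma binomial_term_mult:
  fixes a :: "'a::ring_1"
  assumes "central a"
  shows "c * (of_nat A * a ^ j) * (s * (of_nat B * a ^ l)) = c * s * (of_nat (A * B) * a ^ (j + l))"
proof -
  have comm: "of_nat A * a ^ j * s = s * (of_nat A * a ^ j)"
    using assms by (intro central_commute central_mult central_of_nat central_power)
  have "c * (of_nat A * a ^ j) * (s * (of_nat B * a ^ l)) = c * ((of_nat A * a ^ j * s) * (of_nat B * a ^ l))"
    by (simp add: mult.assoc)
  also have "\<dots> = c * ((s * (of_nat A * a ^ j)) * (of_nat B * a ^ l))"
    by (simp only: comm)
  also have "\<dots> = c * s * (of_nat A * (a ^ j * of_nat B) * a ^ l)"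
    by (simp add: mult.assoc)
  also have "\<dots> = c * s * (of_nat (A * B) * a ^ (j + l))"
    unfolding mult_of_nat_commute[of B "a ^ j", symmetric] by (simp add: mult.assoc power_add)
  finally show ?thesis .
qed

context skew_poly_ring
begin

definition shift_exp :: "nat \<Rightarrow> nat \<Rightarrow> (nat \<Rightarrow> nat) \<Rightarrow> nat \<Rightarrow> nat" where
  "shift_exp i k \<alpha> = \<alpha>(i := \<alpha> i - k, d - 1 := \<alpha> (d - 1) + k)"

text \<open>The image of \<open>c t\<^sup>\<alpha>\<close>: the binomial expansion of \<open>(t\<^sub>i + a t\<^sub>d)\<^bsup>\<alpha> i\<^esup>\<close>,
  which is valid when \<open>a\<close> is central and fixed by \<open>\<sigma>\<close>.\<close>

definition subst_monom :: "nat \<Rightarrow> 'a \<Rightarrow> 'a \<Rightarrow> (nat \<Rightarrow> nat) \<Rightarrow> (nat \<Rightarrow> nat) \<Rightarrow> 'a" where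
  "subst_monom i a c \<alpha> =
     (\<Sum>k\<le>\<alpha> i. skp_monom (c * (of_nat (\<alpha> i choose k) * a ^ k)) (shift_exp i k \<alpha>))"

definition subst_var :: "nat \<Rightarrow> 'a \<Rightarrow> ((nat \<Rightarrow> nat) \<Rightarrow> 'a) \<Rightarrow> (nat \<Rightarrow> nat) \<Rightarrow> 'a" where
  "subst_var i a = lin_ext (subst_monom i a)"

definition total_deg_le :: "nat \<Rightarrow> ((nat \<Rightarrow> nat) \<Rightarrow> 'a) \<Rightarrow> bool" where
  "total_deg_le m p \<longleftrightarrow> (\<forall>\<gamma>. p \<gamma> \<noteq> 0 \<longrightarrow> mdeg d \<gamma> \<le> m)"

lemma mdeg_shift_exp:
  assumes "i < d - 1" "k \<le> \<alpha> i"
  shows "mdeg d (shift_exp i k \<alpha>) = mdeg d \<alpha>"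
proof -
  have "i \<in> {..<d}" "d - 1 \<in> {..<d}" using assms by auto
  moreover have "shift_exp i k \<alpha> j + (if j = i then k else 0) = \<alpha> j + (if j = d - 1 then k else 0)" for j
    using assms by (auto simp: shift_exp_def)
  then have "(\<Sum>j<d. shift_exp i k \<alpha> j + (if j = i then k else 0)) = (\<Sum>j<d. \<alpha> j + (if j = d - 1 then k else 0))"
    by simp
  ultimately show ?thesis by (simp add: sum.distrib mdeg_def)
qed

lemma shift_exp_add:
  assumes "i < d - 1" "j \<le> \<alpha> i" "l \<le> \<beta> i"
  shows "(\<lambda>t. shift_exp i j \<alpha> t + shift_exp i l \<beta> t) = shift_exp i (j + l) (\<lambda>t. \<alpha> t + \<beta> t)"
  using assms by (auto simp: shift_exp_def fun_eq_iff)

lemma in_vars_shift_exp: "i < d - 1 \<Longrightarrow> in_vars d \<alpha> \<Longrightarrow> in_vars d (shift_exp i k \<alpha>)"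
  by (auto simp: in_vars_def shift_exp_def)

lemma subst_monom_0 [simp]: "subst_monom i a 0 \<alpha> = 0"
  by (simp add: subst_monom_def)

lemma subst_monom_add: "subst_monom i a (c + e) \<alpha> = subst_monom i a c \<alpha> + subst_monom i a e \<alpha>"
  by (simp add: subst_monom_def distrib_right skp_monom_add sum.distrib)

lemma finite_supp_subst_monom: "finite (supp (subst_monom i a c \<alpha>))"
  by (simp add: subst_monom_def finite_supp_sum)

lemma subst_monom_mult:
  assumes i: "i < d - 1" and a: "central a" "\<sigma> a = a"
  shows "skp_mult \<sigma> d (subst_monom i a c \<alpha>) (subst_monom i a e \<beta>) =
    subst_monom i a (c * (\<sigma> ^^ mdeg d \<alpha>) e) (\<lambda>j. \<alpha> j + \<beta> j)"
proof -
  define u where "u = c * (\<sigma> ^^ mdeg d \<alpha>) e"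
  define H where "H = (\<lambda>k x. skp_monom (u * (of_nat x * a ^ k)) (shift_exp i k (\<lambda>t. \<alpha> t + \<beta> t)))"
  have binom_term: "skp_mult \<sigma> d (skp_monom (c * (of_nat (\<alpha> i choose j) * a ^ j)) (shift_exp i j \<alpha>))
          (skp_monom (e * (of_nat (\<beta> i choose l) * a ^ l)) (shift_exp i l \<beta>)) =
        H (j + l) ((\<alpha> i choose j) * (\<beta> i choose l))"
    if "j \<le> \<alpha> i" "l \<le> \<beta> i" for j l
  proof -
    have \<sigma>_term: "(\<sigma> ^^ mdeg d \<alpha>) (e * (of_nat (\<beta> i choose l) * a ^ l)) =
        (\<sigma> ^^ mdeg d \<alpha>) e * (of_nat (\<beta> i choose l) * a ^ l)"
      using a by (simp add: sigma_pow_mult sigma_pow_fixed sigma_of_nat sigma_power_fixed)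
    have "mdeg d (shift_exp i j \<alpha>) = mdeg d \<alpha>"
      using i that(1) by (rule mdeg_shift_exp)
    then show ?thesis
      by (simp only: skp_mult_monom H_def u_def \<sigma>_term binomial_term_mult[OF a(1)]
          shift_exp_add[of i j \<alpha> l \<beta>, OF i that])
  qed
  have "skp_mult \<sigma> d (subst_monom i a c \<alpha>) (subst_monom i a e \<beta>) =
      (\<Sum>j\<le>\<alpha> i. \<Sum>l\<le>\<beta> i. skp_mult \<sigma> d (skp_monom (c * (of_nat (\<alpha> i choose j) * a ^ j)) (shift_exp i j \<alpha>))
          (skp_monom (e * (of_nat (\<beta> i choose l) * a ^ l)) (shift_exp i l \<beta>)))"
    unfolding subst_monom_def skp_mult_sum_left[OF finite_supp_skp_monom] skp_mult_sum_right
    by (rule sum.swap)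
  also have "\<dots> = (\<Sum>j\<le>\<alpha> i. \<Sum>l\<le>\<beta> i. H (j + l) ((\<alpha> i choose j) * (\<beta> i choose l)))"
    by (intro sum.cong refl) (simp add: binom_term)
  also have "\<dots> = (\<Sum>k\<le>\<alpha> i + \<beta> i. H k ((\<alpha> i + \<beta> i) choose k))"
    by (rule sum_choose_regroup) (auto simp: H_def distrib_left distrib_right skp_monom_add)
  also have "\<dots> = subst_monom i a u (\<lambda>j. \<alpha> j + \<beta> j)"
    by (simp add: subst_monom_def H_def)
  finally show ?thesis by (simp add: u_def)
qed

lemma subst_monom_eq_monom: "\<alpha> i = 0 \<Longrightarrow> subst_monom i a c \<alpha> = skp_monom c \<alpha>"
  by (simp add: subst_monom_def shift_exp_def fun_upd_idem)

lemma subst_monom_unit_exp: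
  assumes "i < d - 1"
  shows "subst_monom i a 1 (unit_exp i) = skp_monom 1 (unit_exp i) + skp_monom a (unit_exp (d - 1))"
proof -
  have "shift_exp i 0 (unit_exp i) = unit_exp i" "shift_exp i 1 (unit_exp i) = unit_exp (d - 1)"
    using assms by (auto simp: shift_exp_def unit_exp_def fun_eq_iff)
  then show ?thesis by (simp add: subst_monom_def unit_exp_def)
qed

lemma subst_var_skp_monom: "subst_var i a (skp_monom c \<alpha>) = subst_monom i a c \<alpha>"
  unfolding subst_var_def by (rule lin_ext_skp_monom) simp

lemma subst_var_skpolys: "i < d - 1 \<Longrightarrow> p \<in> skpolys d \<Longrightarrow> subst_var i a p \<in> skpolys d"
  unfolding subst_var_def lin_ext_def subst_monom_def
  by (intro skpolys_sum skpolys_skp_monom in_vars_shift_exp) (auto simp: skpolys_iff)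

lemma subst_var_add:
  "p \<in> skpolys d \<Longrightarrow> q \<in> skpolys d \<Longrightarrow> subst_var i a (p + q) = subst_var i a p + subst_var i a q"
  unfolding subst_var_def by (rule lin_ext_add) (auto simp: skpolys_iff subst_monom_add)

lemma subst_var_mult:
  assumes "i < d - 1" "central a" "\<sigma> a = a" "p \<in> skpolys d" "q \<in> skpolys d"
  shows "subst_var i a (skp_mult \<sigma> d p q) = skp_mult \<sigma> d (subst_var i a p) (subst_var i a q)"
  unfolding subst_var_def
  by (rule lin_ext_mult) (use assms in \<open>auto simp: subst_monom_add finite_supp_subst_monom subst_monom_mult\<close>)

lemma total_deg_le_subst_var:
  assumes "i < d - 1" "finite (supp p)" "total_deg_le m p"
  shows "total_deg_le m (subst_var i a p)"
  unfolding total_deg_le_def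
proof (intro allI impI)
  fix \<gamma> assume "subst_var i a p \<gamma> \<noteq> 0"
  then obtain \<alpha> k where \<alpha>: "\<alpha> \<in> supp p" "k \<le> \<alpha> i"
    and "skp_monom (p \<alpha> * (of_nat (\<alpha> i choose k) * a ^ k)) (shift_exp i k \<alpha>) \<gamma> \<noteq> 0"
    unfolding subst_var_def lin_ext_def subst_monom_def sum_fun_apply by (auto elim!: sum.not_neutral_contains_not_neutral)
  then have "\<gamma> = shift_exp i k \<alpha>" by (auto simp: skp_monom_def split: if_splits)
  then show "mdeg d \<gamma> \<le> m"
    using assms \<alpha> mdeg_shift_exp by (auto simp: total_deg_le_def supp_def)
qed

end

section \<open>Substituting all variables\<close>

text \<open>A product taken in a fixed order, since \<open>'a\<close> is not commutative; the order is
  irrelevant as soon as the \<open>b\<^sub>j\<close> are central.\<close>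

primrec monom_val :: "(nat \<Rightarrow> 'a::ring_1) \<Rightarrow> (nat \<Rightarrow> nat) \<Rightarrow> nat \<Rightarrow> 'a" where
  "monom_val b \<alpha> 0 = 1"
| "monom_val b \<alpha> (Suc n) = monom_val b \<alpha> n * b n ^ \<alpha> n"

lemma monom_val_cong:
  "(\<And>j. j < n \<Longrightarrow> b j ^ \<alpha> j = b' j ^ \<alpha>' j) \<Longrightarrow> monom_val b \<alpha> n = monom_val b' \<alpha>' n"
  by (induction n) auto

lemma monom_val_upd: "n \<le> k \<Longrightarrow> monom_val (b(k := x)) \<alpha> n = monom_val b \<alpha> n"
  by (rule monom_val_cong) simp

lemma monom_val_zero: "monom_val (\<lambda>_. 0) \<gamma> n = (if \<forall>j<n. \<gamma> j = 0 then 1 else 0)"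
  by (induction n) (auto simp: less_Suc_eq power_0_left)

lemma monom_val_split:
  assumes "\<And>j. j < n \<Longrightarrow> central (b j)" "i < n"
  shows "monom_val b \<alpha> n = monom_val b (\<alpha>(i := 0)) n * b i ^ \<alpha> i"
  using assms
proof (induction n)
  case (Suc n)
  show ?case
  proof (cases "i = n")
    case True
    have "monom_val b \<alpha> n = monom_val b (\<alpha>(i := 0)) n"
      by (rule monom_val_cong) (use True in auto)
    moreover have "monom_val b (\<alpha>(i := 0)) (Suc n) = monom_val b (\<alpha>(i := 0)) n"
      by (simp only: monom_val.simps True fun_upd_same power_0 mult_1_right)
    ultimately show ?thesis using True by (simp only: monom_val.simps)
  next
    case False
    then have "i < n" using Suc.prems by simp
    have IH: "monom_val b \<alpha> n = monom_val b (\<alpha>(i := 0)) n * b i ^ \<alpha> i"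
      by (rule Suc.IH) (use Suc.prems \<open>i < n\<close> in auto)
    have upd: "monom_val b (\<alpha>(i := 0)) (Suc n) = monom_val b (\<alpha>(i := 0)) n * b n ^ \<alpha> n"
      using False by (simp only: monom_val.simps fun_upd_other)
    have comm: "b i ^ \<alpha> i * b n ^ \<alpha> n = b n ^ \<alpha> n * b i ^ \<alpha> i"
      using Suc.prems \<open>i < n\<close> by (intro central_commute central_power) auto
    have "monom_val b \<alpha> (Suc n) = monom_val b (\<alpha>(i := 0)) n * (b i ^ \<alpha> i * b n ^ \<alpha> n)"
      using IH by (simp only: monom_val.simps mult.assoc)
    also have "\<dots> = monom_val b (\<alpha>(i := 0)) (Suc n) * b i ^ \<alpha> i"
      using upd comm by (simp only: mult.assoc)
    finally show ?thesis .
  qed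
qed simp

context skew_poly_ring
begin

text \<open>The value of the homogeneous component of degree \<open>m\<close> at \<open>t\<^sub>j = b\<^sub>j\<close> for \<open>j < d - 1\<close>
  and \<open>t\<^sub>d = 1\<close>.\<close>

definition top_eval :: "(nat \<Rightarrow> 'a) \<Rightarrow> nat \<Rightarrow> ((nat \<Rightarrow> nat) \<Rightarrow> 'a) \<Rightarrow> 'a" where
  "top_eval b m = lin_ext (\<lambda>c \<alpha>. if mdeg d \<alpha> = m then c * monom_val b \<alpha> (d - 1) else 0)"

lemma top_eval_sum:
  "(\<And>x. x \<in> A \<Longrightarrow> finite (supp (h x))) \<Longrightarrow> top_eval b m (\<Sum>x\<in>A. h x) = (\<Sum>x\<in>A. top_eval b m (h x))"
  unfolding top_eval_def by (rule lin_ext_sum) (auto simp: distrib_right)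

lemma top_eval_skp_monom:
  "top_eval b m (skp_monom c \<alpha>) = (if mdeg d \<alpha> = m then c * monom_val b \<alpha> (d - 1) else 0)"
  unfolding top_eval_def by (rule lin_ext_skp_monom) simp

text \<open>Only the term \<open>k = \<alpha> i\<close> of the binomial expansion survives, since \<open>b\<^sub>i = 0\<close>.\<close>

lemma top_eval_subst_monom:
  assumes i: "i < d - 1" and a: "central a" and b: "\<And>j. j < d - 1 \<Longrightarrow> central (b j)" and bi: "b i = 0"
  shows "top_eval b m (subst_monom i a c \<alpha>) =
    (if mdeg d \<alpha> = m then c * monom_val (b(i := a)) \<alpha> (d - 1) else 0)"
proof -
  let ?P = "monom_val b (\<alpha>(i := 0)) (d - 1)"
  have "monom_val b (shift_exp i k \<alpha>) (d - 1) = monom_val b (\<alpha>(i := \<alpha> i - k)) (d - 1)" for k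
    by (rule monom_val_cong) (auto simp: shift_exp_def)
  also have "\<dots> k = ?P * 0 ^ (\<alpha> i - k)" for k
    using monom_val_split[of "d - 1" b i "\<alpha>(i := \<alpha> i - k)", OF b i] bi by simp
  finally have vals: "monom_val b (shift_exp i k \<alpha>) (d - 1) = ?P * 0 ^ (\<alpha> i - k)" for k .
  have "top_eval b m (subst_monom i a c \<alpha>) = (\<Sum>k\<le>\<alpha> i. if mdeg d \<alpha> = m
      then c * (of_nat (\<alpha> i choose k) * a ^ k) * monom_val b (shift_exp i k \<alpha>) (d - 1) else 0)"
    by (simp add: subst_monom_def top_eval_sum top_eval_skp_monom mdeg_shift_exp[OF i])
  also have "\<dots> = (\<Sum>k\<le>\<alpha> i. if k = \<alpha> i then (if mdeg d \<alpha> = m then c * a ^ \<alpha> i * ?P else 0) else 0)"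
    by (intro sum.cong refl, unfold vals) (auto simp: power_0_left)
  also have "\<dots> = (if mdeg d \<alpha> = m then c * (?P * a ^ \<alpha> i) else 0)"
    using central_commute[OF central_power[OF a], of "\<alpha> i" ?P] by (simp add: mult.assoc)
  also have "?P * a ^ \<alpha> i = monom_val (b(i := a)) \<alpha> (d - 1)"
  proof -
    have "monom_val (b(i := a)) \<alpha> (d - 1) = monom_val (b(i := a)) (\<alpha>(i := 0)) (d - 1) * a ^ \<alpha> i"
      using monom_val_split[of "d - 1" "b(i := a)" i \<alpha>] b a i by auto
    also have "monom_val (b(i := a)) (\<alpha>(i := 0)) (d - 1) = ?P"
      by (rule monom_val_cong) auto
    finally show ?thesis ..
  qed
  finally show ?thesis .
qed

lemma top_eval_subst_var:
  assumes "i < d - 1" "central a" "\<And>j. j < d - 1 \<Longrightarrow> central (b j)" "b i = 0" "finite (supp p)"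
  shows "top_eval b m (subst_var i a p) = top_eval (b(i := a)) m p"
proof -
  have "top_eval b m (subst_var i a p) = (\<Sum>\<alpha>\<in>supp p. top_eval b m (subst_monom i a (p \<alpha>) \<alpha>))"
    unfolding subst_var_def lin_ext_def by (rule top_eval_sum) (simp add: finite_supp_subst_monom)
  also have "\<dots> = (\<Sum>\<alpha>\<in>supp p. if mdeg d \<alpha> = m then p \<alpha> * monom_val (b(i := a)) \<alpha> (d - 1) else 0)"
    using assms by (simp add: top_eval_subst_monom)
  also have "\<dots> = top_eval (b(i := a)) m p"
    by (simp add: top_eval_def lin_ext_def)
  finally show ?thesis .
qed

primrec subst_upto :: "(nat \<Rightarrow> 'a) \<Rightarrow> nat \<Rightarrow> ((nat \<Rightarrow> nat) \<Rightarrow> 'a) \<Rightarrow> (nat \<Rightarrow> nat) \<Rightarrow> 'a" where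
  "subst_upto b 0 = id"
| "subst_upto b (Suc n) = subst_upto b n \<circ> subst_var n (b n)"

lemma subst_upto_skpolys: "n \<le> d - 1 \<Longrightarrow> p \<in> skpolys d \<Longrightarrow> subst_upto b n p \<in> skpolys d"
  by (induction n arbitrary: p) (auto simp: subst_var_skpolys)

lemma subst_upto_add:
  "n \<le> d - 1 \<Longrightarrow> p \<in> skpolys d \<Longrightarrow> q \<in> skpolys d \<Longrightarrow>
   subst_upto b n (p + q) = subst_upto b n p + subst_upto b n q"
  by (induction n arbitrary: p q) (auto simp: subst_var_add subst_var_skpolys)

lemma subst_upto_mult:
  assumes "\<And>j. j < d - 1 \<Longrightarrow> central (b j) \<and> \<sigma> (b j) = b j"
  shows "n \<le> d - 1 \<Longrightarrow> p \<in> skpolys d \<Longrightarrow> q \<in> skpolys d \<Longrightarrow>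
    subst_upto b n (skp_mult \<sigma> d p q) = skp_mult \<sigma> d (subst_upto b n p) (subst_upto b n q)"
  by (induction n arbitrary: p q) (auto simp: subst_var_mult subst_var_skpolys assms)

lemma subst_upto_skp_monom:
  "(\<And>j. j < n \<Longrightarrow> \<alpha> j = 0) \<Longrightarrow> subst_upto b n (skp_monom c \<alpha>) = skp_monom c \<alpha>"
  by (induction n) (auto simp: subst_var_skp_monom subst_monom_eq_monom)

lemma subst_upto_unit_exp:
  assumes "i < d - 1" "n \<le> d - 1"
  shows "subst_upto b n (skp_monom 1 (unit_exp i)) =
    (if i < n then skp_monom 1 (unit_exp i) + skp_monom (b i) (unit_exp (d - 1)) else skp_monom 1 (unit_exp i))"
  using assms(2)
proof (induction n)
  case (Suc n)
  show ?case
  proof (cases "i = n")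
    case True
    have "subst_upto b (Suc n) (skp_monom 1 (unit_exp i)) =
        subst_upto b n (skp_monom 1 (unit_exp n)) + subst_upto b n (skp_monom (b n) (unit_exp (d - 1)))"
      using True assms Suc.prems
      by (simp add: subst_var_skp_monom subst_monom_unit_exp subst_upto_add skpolys_skp_monom in_vars_unit_exp)
    then show ?thesis
      using True Suc.prems by (simp add: subst_upto_skp_monom unit_exp_def)
  qed (use Suc in \<open>auto simp: subst_var_skp_monom subst_monom_eq_monom unit_exp_def\<close>)
qed simp

lemma total_deg_le_subst_upto:
  "n \<le> d - 1 \<Longrightarrow> p \<in> skpolys d \<Longrightarrow> total_deg_le m p \<Longrightarrow> total_deg_le m (subst_upto b n p)"
proof (induction n arbitrary: p)
  case (Suc n)
  then show ?case
    using subst_var_skpolys[of n p "b n"] total_deg_le_subst_var[of n p m "b n"]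
    by (auto simp: skpolys_iff)
qed simp

lemma top_eval_subst_upto:
  assumes "\<And>j. j < d - 1 \<Longrightarrow> central (b j)"
  shows "n \<le> d - 1 \<Longrightarrow> p \<in> skpolys d \<Longrightarrow>
    top_eval (\<lambda>_. 0) m (subst_upto b n p) = top_eval (\<lambda>j. if j < n then b j else 0) m p"
proof (induction n arbitrary: p)
  case (Suc n)
  have "top_eval (\<lambda>_. 0) m (subst_upto b (Suc n) p) =
      top_eval (\<lambda>j. if j < n then b j else 0) m (subst_var n (b n) p)"
    using Suc by (simp add: subst_var_skpolys)
  also have "\<dots> = top_eval ((\<lambda>j. if j < n then b j else 0)(n := b n)) m p"
    by (rule top_eval_subst_var) (use Suc.prems assms in \<open>auto simp: skpolys_iff\<close>)
  also have "(\<lambda>j. if j < n then b j else 0)(n := b n) = (\<lambda>j. if j < Suc n then b j else 0)"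
    by (auto simp: fun_eq_iff)
  finally show ?case .
qed simp

lemma skp_subst_hom_subst_upto:
  assumes "\<And>j. j < d - 1 \<Longrightarrow> central (b j) \<and> \<sigma> (b j) = b j"
  shows "skp_subst_hom \<sigma> d b (subst_upto b (d - 1))"
  unfolding skp_subst_hom_def skp_add_eq_plus
proof (intro conjI ballI allI impI)
  fix p q :: "(nat \<Rightarrow> nat) \<Rightarrow> 'a" assume "p \<in> skpolys d" "q \<in> skpolys d"
  then show "subst_upto b (d - 1) (p + q) = subst_upto b (d - 1) p + subst_upto b (d - 1) q"
    and "subst_upto b (d - 1) (skp_mult \<sigma> d p q) =
      skp_mult \<sigma> d (subst_upto b (d - 1) p) (subst_upto b (d - 1) q)"
    by (simp_all add: subst_upto_add subst_upto_mult assms)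
next
  fix i assume i: "i < d - 1"
  have "skp_mult \<sigma> d (skp_const (b i)) (skp_var (d - 1)) = skp_monom (b i) (unit_exp (d - 1))"
    by (simp add: skp_const_eq_monom skp_var_eq_monom skp_mult_monom mdeg_def sigma_1)
  then show "subst_upto b (d - 1) (skp_var i) =
      skp_var i + skp_mult \<sigma> d (skp_const (b i)) (skp_var (d - 1))"
    using subst_upto_unit_exp[OF i, of "d - 1" b] i by (simp add: skp_var_eq_monom)
qed (simp_all add: subst_upto_skpolys skp_const_eq_monom skp_var_eq_monom subst_upto_skp_monom
    unit_exp_def)

end

section \<open>Non-vanishing at central points\<close>

lemma power_diff_eq_sum_mult:
  fixes x y :: "'a::ring_1"
  assumes "x * y = y * x"
  shows "(\<Sum>j\<le>n. y ^ (n - j) * x ^ j) * (x - y) = x ^ Suc n - y ^ Suc n"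
proof (induction n)
  case (Suc n)
  have "(\<Sum>j\<le>Suc n. y ^ (Suc n - j) * x ^ j) = y * (\<Sum>j\<le>n. y ^ (n - j) * x ^ j) + x ^ Suc n"
    by (simp add: sum_distrib_left mult.assoc Suc_diff_le)
  then have "(\<Sum>j\<le>Suc n. y ^ (Suc n - j) * x ^ j) * (x - y) =
      y * (x ^ Suc n - y ^ Suc n) + x ^ Suc n * (x - y)"
    using Suc by (simp add: distrib_right mult.assoc)
  also have "\<dots> = x ^ Suc n * x - y * y ^ Suc n"
    using power_commuting_commutes[OF assms, of "Suc n"] by (simp add: algebra_simps del: power_Suc)
  also have "\<dots> = x ^ Suc (Suc n) - y ^ Suc (Suc n)"
    by (simp only: power_Suc2[of x "Suc n"] power_Suc[of y "Suc n"])
  finally show ?case .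
qed simp

text \<open>The coefficients of the quotient of \<open>\<Sum>k\<le>M+1. q k x\<^sup>k\<close> by \<open>x - y\<close>.\<close>

definition horner_quot :: "(nat \<Rightarrow> 'a::ring_1) \<Rightarrow> 'a \<Rightarrow> nat \<Rightarrow> nat \<Rightarrow> 'a" where
  "horner_quot q y M j = (\<Sum>k\<in>{Suc j..Suc M}. q k * y ^ (k - Suc j))"

lemma horner_quot_mult:
  fixes x y :: "'a::ring_1"
  assumes "x * y = y * x"
  shows "(\<Sum>j\<le>M. horner_quot q y M j * x ^ j) * (x - y) =
    (\<Sum>k\<le>Suc M. q k * x ^ k) - (\<Sum>k\<le>Suc M. q k * y ^ k)"
proof -
  have "(\<Sum>j\<le>M. horner_quot q y M j * x ^ j) * (x - y)
      = (\<Sum>j\<le>M. \<Sum>k | k \<in> {..Suc M} \<and> Suc j \<le> k. q k * (y ^ (k - Suc j) * x ^ j * (x - y)))"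
    unfolding horner_quot_def sum_distrib_right mult.assoc
    by (intro sum.cong) (auto intro: sum.cong)
  also have "\<dots> = (\<Sum>k\<le>Suc M. \<Sum>j | j \<in> {..M} \<and> Suc j \<le> k. q k * (y ^ (k - Suc j) * x ^ j * (x - y)))"
    by (rule sum.swap_restrict) auto
  also have "\<dots> = (\<Sum>k\<le>Suc M. q k * (x ^ k - y ^ k))"
  proof (rule sum.cong[OF refl])
    fix k assume k: "k \<in> {..Suc M}"
    show "(\<Sum>j | j \<in> {..M} \<and> Suc j \<le> k. q k * (y ^ (k - Suc j) * x ^ j * (x - y))) = q k * (x ^ k - y ^ k)"
    proof (cases k)
      case (Suc n)
      have "{j. j \<in> {..M} \<and> Suc j \<le> k} = {..n}" using k Suc by auto
      then have "(\<Sum>j | j \<in> {..M} \<and> Suc j \<le> k. q k * (y ^ (k - Suc j) * x ^ j * (x - y))) =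
          q k * ((\<Sum>j\<le>n. y ^ (n - j) * x ^ j) * (x - y))"
        using Suc by (simp add: sum_distrib_left sum_distrib_right mult.assoc)
      then show ?thesis
        using power_diff_eq_sum_mult[OF assms, of n] Suc by simp
    qed simp
  qed
  also have "\<dots> = (\<Sum>k\<le>Suc M. q k * x ^ k) - (\<Sum>k\<le>Suc M. q k * y ^ k)"
    by (simp add: right_diff_distrib sum_subtractf)
  finally show ?thesis .
qed

lemma horner_quot_Suc:
  assumes "j \<le> M"
  shows "horner_quot q y M j = q (Suc j) + horner_quot q y M (Suc j) * y"
proof -
  have "{Suc j..Suc M} = insert (Suc j) {Suc (Suc j)..Suc M}" using assms by auto
  then have "horner_quot q y M j = q (Suc j) + (\<Sum>k\<in>{Suc (Suc j)..Suc M}. q k * y ^ (k - Suc j))"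
    by (simp add: horner_quot_def)
  also have "(\<Sum>k\<in>{Suc (Suc j)..Suc M}. q k * y ^ (k - Suc j)) =
      (\<Sum>k\<in>{Suc (Suc j)..Suc M}. q k * y ^ (k - Suc (Suc j)) * y)"
  proof (rule sum.cong[OF refl])
    fix k assume "k \<in> {Suc (Suc j)..Suc M}"
    then have "k - Suc j = Suc (k - Suc (Suc j))" by auto
    then show "q k * y ^ (k - Suc j) = q k * y ^ (k - Suc (Suc j)) * y"
      by (simp add: mult.assoc power_commutes)
  qed
  finally show ?thesis by (simp only: horner_quot_def sum_distrib_right)
qed

lemma central_roots_imp_coeff_zero:
  fixes q :: "nat \<Rightarrow> 'a::division_ring"
  assumes "finite X" "\<And>x. x \<in> X \<Longrightarrow> central x" "card X > N"
    and "\<And>x. x \<in> X \<Longrightarrow> (\<Sum>k\<le>N. q k * x ^ k) = 0" "k \<le> N"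
  shows "q k = 0"
  using assms
proof (induction N arbitrary: q X k)
  case 0
  then obtain x where "x \<in> X" by (metis card.empty ex_in_conv less_irrefl)
  then show ?case using 0 by auto
next
  case (Suc M)
  then obtain y where y: "y \<in> X" by (metis card.empty ex_in_conv not_less0)
  let ?r = "horner_quot q y M"
  have P0: "(\<Sum>k\<le>Suc M. q k * y ^ k) = 0" using Suc.prems y by auto
  have r0: "?r j = 0" if "j \<le> M" for j
  proof (rule Suc.IH[of "X - {y}"])
    fix x assume x: "x \<in> X - {y}"
    then have "(\<Sum>j\<le>M. ?r j * x ^ j) * (x - y) = 0"
      using horner_quot_mult[of x y q M] Suc.prems(2,4) y P0 by (simp add: central_commute)
    moreover have "x - y \<noteq> 0" using x by auto
    ultimately show "(\<Sum>j\<le>M. ?r j * x ^ j) = 0" by simp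
  qed (use that Suc.prems y in auto)
  have "horner_quot q y M (Suc M) = 0"
    by (simp add: horner_quot_def)
  then have q_Suc: "q (Suc j) = 0" if "j \<le> M" for j
    using horner_quot_Suc[OF that, of q y] r0[OF that] r0[of "Suc j"] that
    by (cases "j = M") auto
  show ?case
  proof (cases k)
    case 0
    have "(\<Sum>k\<le>Suc M. q k * y ^ k) = q 0 + (\<Sum>k\<le>M. q (Suc k) * y ^ Suc k)"
      by (simp only: sum.atMost_Suc_shift power_0 mult_1_right)
    also have "\<dots> = q 0"
      using q_Suc by simp
    finally have "(\<Sum>k\<le>Suc M. q k * y ^ k) = q 0" .
    then show ?thesis using P0 0 by simp
  qed (use q_Suc Suc.prems in auto)
qed

lemma exists_central_nonroot:
  fixes q :: "nat \<Rightarrow> 'a::division_ring"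
  assumes "infinite F" "\<And>x. x \<in> F \<Longrightarrow> central x" "q k \<noteq> 0" "k \<le> N"
  shows "\<exists>x\<in>F. (\<Sum>k\<le>N. q k * x ^ k) \<noteq> 0"
proof (rule ccontr)
  assume no_nonroot: "\<not> ?thesis"
  obtain X where X: "finite X" "card X = Suc N" "X \<subseteq> F"
    using infinite_arbitrarily_large[OF assms(1)] by blast
  have "q k = 0"
    by (rule central_roots_imp_coeff_zero[of X N]) (use X no_nonroot assms in auto)
  with assms(3) show False ..
qed

text \<open>Read through their first \<open>n\<close> exponents, the values of \<open>c\<close> on \<open>S\<close> are the
  coefficients of a nonzero polynomial in \<open>n\<close> commuting variables.\<close>

lemma exists_central_point_nonzero:
  fixes c :: "(nat \<Rightarrow> nat) \<Rightarrow> 'a::division_ring"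
  assumes F: "infinite F" "\<And>x. x \<in> F \<Longrightarrow> central x"
  shows "finite S \<Longrightarrow> (\<forall>\<alpha>\<in>S. \<forall>\<beta>\<in>S. (\<forall>j<n. \<alpha> j = \<beta> j) \<longrightarrow> \<alpha> = \<beta>) \<Longrightarrow> \<alpha>\<^sub>0 \<in> S \<Longrightarrow>
    c \<alpha>\<^sub>0 \<noteq> 0 \<Longrightarrow> \<exists>b. (\<forall>j. b j \<in> F) \<and> (\<Sum>\<alpha>\<in>S. c \<alpha> * monom_val b \<alpha> n) \<noteq> 0"
proof (induction n arbitrary: S \<alpha>\<^sub>0)
  case 0
  then have "S = {\<alpha>\<^sub>0}" by auto
  moreover obtain x where "x \<in> F" using F(1) by (metis ex_in_conv finite.emptyI)
  ultimately show ?case using 0 by (intro exI[of _ "\<lambda>_. x"]) auto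
next
  case (Suc n)
  define S\<^sub>e where "S\<^sub>e = (\<lambda>e. {\<alpha>\<in>S. \<alpha> n = e})"
  \<comment> \<open>\<open>b\<^sub>0, \<dots>, b\<^bsub>n-1\<^esub>\<close> come from the slice of \<open>\<alpha>\<^sub>0\<close>, and \<open>b\<^sub>n\<close> is a
     non-root of the resulting polynomial in one variable.\<close>
  have "\<exists>b. (\<forall>j. b j \<in> F) \<and> (\<Sum>\<alpha>\<in>S\<^sub>e (\<alpha>\<^sub>0 n). c \<alpha> * monom_val b \<alpha> n) \<noteq> 0"
  proof (rule Suc.IH)
    show "\<forall>\<alpha>\<in>S\<^sub>e (\<alpha>\<^sub>0 n). \<forall>\<beta>\<in>S\<^sub>e (\<alpha>\<^sub>0 n). (\<forall>j<n. \<alpha> j = \<beta> j) \<longrightarrow> \<alpha> = \<beta>"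
      using Suc.prems(2) by (auto simp: S\<^sub>e_def less_Suc_eq)
  qed (use Suc.prems in \<open>auto simp: S\<^sub>e_def\<close>)
  then obtain b where b: "\<forall>j. b j \<in> F" "(\<Sum>\<alpha>\<in>S\<^sub>e (\<alpha>\<^sub>0 n). c \<alpha> * monom_val b \<alpha> n) \<noteq> 0"
    by blast
  define N where "N = Max ((\<lambda>\<alpha>. \<alpha> n) ` S)"
  have N: "\<alpha> n \<le> N" if "\<alpha> \<in> S" for \<alpha>
    using Suc.prems(1) that by (simp add: N_def)
  define q where "q = (\<lambda>e. \<Sum>\<alpha>\<in>S\<^sub>e e. c \<alpha> * monom_val b \<alpha> n)"
  obtain x where x: "x \<in> F" "(\<Sum>e\<le>N. q e * x ^ e) \<noteq> 0"
    using exists_central_nonroot[OF F, of q "\<alpha>\<^sub>0 n" N] b(2) N Suc.prems(3) by (auto simp: q_def)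
  have "(\<Sum>\<alpha>\<in>S. c \<alpha> * monom_val (b(n := x)) \<alpha> (Suc n)) = (\<Sum>\<alpha>\<in>S. c \<alpha> * monom_val b \<alpha> n * x ^ \<alpha> n)"
    by (simp add: monom_val_upd mult.assoc)
  also have "\<dots> = (\<Sum>e\<le>N. \<Sum>\<alpha>\<in>S\<^sub>e e. c \<alpha> * monom_val b \<alpha> n * x ^ \<alpha> n)"
    unfolding S\<^sub>e_def by (rule sum.group[symmetric]) (use Suc.prems N in auto)
  also have "\<dots> = (\<Sum>e\<le>N. q e * x ^ e)"
    by (auto simp: q_def S\<^sub>e_def sum_distrib_right intro!: sum.cong)
  finally have "(\<Sum>\<alpha>\<in>S. c \<alpha> * monom_val (b(n := x)) \<alpha> (Suc n)) \<noteq> 0"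
    using x(2) by simp
  moreover have "\<forall>j. (b(n := x)) j \<in> F"
    using b(1) x(1) by simp
  ultimately show ?case by blast
qed

section \<open>The leading coefficient in \<open>t\<^sub>d\<close>\<close>

lemma mdeg_split: "d \<ge> 1 \<Longrightarrow> mdeg d \<alpha> = (\<Sum>j<d - 1. \<alpha> j) + \<alpha> (d - 1)"
  using sum.lessThan_Suc[of \<alpha> "d - 1"] by (simp add: mdeg_def)

lemma add_le_mdeg:
  assumes "j < d" "k < d" "j \<noteq> k"
  shows "\<alpha> j + \<alpha> k \<le> mdeg d \<alpha>"
proof -
  have "\<alpha> j + \<alpha> k = (\<Sum>i\<in>{j, k}. \<alpha> i)" using assms by simp
  also have "\<dots> \<le> (\<Sum>i<d. \<alpha> i)" by (rule sum_mono2) (use assms in auto)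
  finally show ?thesis by (simp add: mdeg_def)
qed

lemma exp_eq_if_mdeg_eq:
  assumes "d \<ge> 1" "in_vars d \<alpha>" "in_vars d \<beta>" "mdeg d \<alpha> = mdeg d \<beta>" "\<forall>j<d - 1. \<alpha> j = \<beta> j"
  shows "\<alpha> = \<beta>"
proof
  fix j
  have "\<alpha> (d - 1) = \<beta> (d - 1)"
    using assms mdeg_split[of d \<alpha>] mdeg_split[of d \<beta>] by simp
  then show "\<alpha> j = \<beta> j"
    using assms by (cases "j < d - 1"; cases "j = d - 1") (auto simp: in_vars_def)
qed

context skew_poly_ring
begin

definition last_power :: "nat \<Rightarrow> nat \<Rightarrow> nat" where
  "last_power m = (\<lambda>j. if j = d - 1 then m else 0)"

lemma in_vars_last_power: "d \<ge> 1 \<Longrightarrow> in_vars d (last_power m)"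
  by (auto simp: in_vars_def last_power_def)

lemma mdeg_last_power: "d \<ge> 1 \<Longrightarrow> mdeg d (last_power m) = m"
  by (simp add: mdeg_split last_power_def)

lemma top_eval_zero_eq_coeff:
  assumes d: "d \<ge> 1" and p: "p \<in> skpolys d"
  shows "top_eval (\<lambda>_. 0) m p = p (last_power m)"
proof -
  have "(if mdeg d \<gamma> = m then p \<gamma> * monom_val (\<lambda>_. 0) \<gamma> (d - 1) else 0) =
      (if \<gamma> = last_power m then p \<gamma> else 0)" if "\<gamma> \<in> supp p" for \<gamma>
  proof (cases "\<gamma> = last_power m")
    case False
    have "in_vars d \<gamma>" using p that by (auto simp: skpolys_iff)
    moreover have "\<forall>j<d - 1. last_power m j = 0" by (simp add: last_power_def)
    ultimately have "\<not> (mdeg d \<gamma> = m \<and> (\<forall>j<d - 1. \<gamma> j = 0))"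
      using exp_eq_if_mdeg_eq[OF d _ in_vars_last_power[OF d], of \<gamma> m] mdeg_last_power[OF d] False
      by auto
    then show ?thesis using False by (auto simp: monom_val_zero)
  next
    case True
    moreover have "\<forall>j<d - 1. last_power m j = 0" by (simp add: last_power_def)
    ultimately show ?thesis using mdeg_last_power[OF d] by (simp add: monom_val_zero)
  qed
  then have "top_eval (\<lambda>_. 0) m p = (\<Sum>\<gamma>\<in>supp p. if \<gamma> = last_power m then p \<gamma> else 0)"
    unfolding top_eval_def lin_ext_def by (intro sum.cong refl) auto
  also have "\<dots> = p (last_power m)"
    using p by (simp add: sum.delta skpolys_iff supp_def)
  finally show ?thesis .
qed

lemma coeff_subst_upto_last_power:
  assumes "d \<ge> 1" "p \<in> skpolys d" "\<And>j. j < d - 1 \<Longrightarrow> central (b j)"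
  shows "subst_upto b (d - 1) p (last_power m) = top_eval b m p"
proof -
  have "subst_upto b (d - 1) p (last_power m) = top_eval (\<lambda>_. 0) m (subst_upto b (d - 1) p)"
    using assms by (simp add: top_eval_zero_eq_coeff subst_upto_skpolys)
  also have "\<dots> = top_eval (\<lambda>j. if j < d - 1 then b j else 0) m p"
    using assms by (simp add: top_eval_subst_upto)
  also have "\<dots> = top_eval b m p"
    unfolding top_eval_def lin_ext_def by (intro sum.cong refl) (auto intro!: monom_val_cong)
  finally show ?thesis .
qed

lemma exists_point_top_eval_nonzero:
  assumes F: "infinite F" "\<And>x. x \<in> F \<Longrightarrow> central x"
    and d: "d \<ge> 1" and f: "f \<in> skpolys d" "f \<noteq> skp_zero"
  shows "\<exists>b m. (\<forall>j. b j \<in> F) \<and> total_deg_le m f \<and> top_eval b m f \<noteq> 0"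
proof -
  have fin: "finite (supp f)" and vars: "\<And>\<alpha>. \<alpha> \<in> supp f \<Longrightarrow> in_vars d \<alpha>"
    using f(1) by (auto simp: skpolys_iff)
  have "supp f \<noteq> {}"
    using f(2) by (auto simp: supp_def skp_zero_def)
  define m where "m = Max (mdeg d ` supp f)"
  have "m \<in> mdeg d ` supp f"
    unfolding m_def using fin \<open>supp f \<noteq> {}\<close> by (intro Max_in) auto
  then obtain \<alpha>\<^sub>0 where \<alpha>\<^sub>0: "\<alpha>\<^sub>0 \<in> supp f" "mdeg d \<alpha>\<^sub>0 = m"
    by auto
  have deg: "total_deg_le m f"
    using fin by (auto simp: total_deg_le_def m_def supp_def)
  define S where "S = {\<alpha>\<in>supp f. mdeg d \<alpha> = m}"
  have "\<forall>\<alpha>\<in>S. \<forall>\<beta>\<in>S. (\<forall>j<d - 1. \<alpha> j = \<beta> j) \<longrightarrow> \<alpha> = \<beta>"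
    using exp_eq_if_mdeg_eq[OF d] vars by (auto simp: S_def)
  moreover have "\<alpha>\<^sub>0 \<in> S" "f \<alpha>\<^sub>0 \<noteq> 0"
    using \<alpha>\<^sub>0 by (auto simp: S_def supp_def)
  ultimately obtain b where b: "\<forall>j. b j \<in> F" and nz: "(\<Sum>\<alpha>\<in>S. f \<alpha> * monom_val b \<alpha> (d - 1)) \<noteq> 0"
    using exists_central_point_nonzero[OF F, of S "d - 1" \<alpha>\<^sub>0 f] fin by (auto simp: S_def)
  have "top_eval b m f = (\<Sum>\<alpha>\<in>supp f. if mdeg d \<alpha> = m then f \<alpha> * monom_val b \<alpha> (d - 1) else 0)"
    by (simp add: top_eval_def lin_ext_def)
  also have "\<dots> = (\<Sum>\<alpha>\<in>S. f \<alpha> * monom_val b \<alpha> (d - 1))"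
    by (simp only: S_def sum.inter_filter[OF fin])
  finally have "top_eval b m f \<noteq> 0"
    using nz by simp
  with b deg show ?thesis by blast
qed

lemma deg_in_last_eq:
  assumes d: "d \<ge> 1" and h: "h \<in> skpolys d" "total_deg_le m h" "h (last_power m) \<noteq> 0"
  shows "deg_in h (d - 1) = m"
  unfolding deg_in_def
proof (rule Max_eqI)
  have "\<gamma> (d - 1) \<le> m" if "h \<gamma> \<noteq> 0" for \<gamma>
    using that h(2) mdeg_split[OF d, of \<gamma>] by (auto simp: total_deg_le_def)
  then show "finite {\<gamma> (d - 1) |\<gamma>. h \<gamma> \<noteq> 0}" and "\<And>e. e \<in> {\<gamma> (d - 1) |\<gamma>. h \<gamma> \<noteq> 0} \<Longrightarrow> e \<le> m"
    by (auto intro: finite_subset[of _ "{..m}"])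
  show "m \<in> {\<gamma> (d - 1) |\<gamma>. h \<gamma> \<noteq> 0}"
    using h(3) by (auto simp: last_power_def intro!: exI[of _ "last_power m"])
qed

lemma monic_in_last_if_coeff_last_power:
  assumes d: "d \<ge> 1" and h: "h \<in> skpolys d" "total_deg_le m h" and top: "h (last_power m) = 1"
  shows "monic_in_last d h"
  unfolding monic_in_last_def deg_in_last_eq[OF d h(1,2), unfolded top, OF one_neq_zero]
proof (intro conjI allI impI)
  show "h \<noteq> skp_zero"
    using top by (auto simp: skp_zero_def fun_eq_iff intro!: exI[of _ "last_power m"])
  fix \<alpha> :: "nat \<Rightarrow> nat" assume last: "\<alpha> (d - 1) = m"
  show "h \<alpha> = (if \<forall>j. j \<noteq> d - 1 \<longrightarrow> \<alpha> j = 0 then 1 else 0)"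
  proof (cases "\<forall>j. j \<noteq> d - 1 \<longrightarrow> \<alpha> j = 0")
    case True
    then have "\<alpha> = last_power m"
      using last by (auto simp: last_power_def)
    then show ?thesis using True top by simp
  next
    case False
    then obtain j where j: "j \<noteq> d - 1" "\<alpha> j \<noteq> 0" by auto
    have "h \<alpha> = 0"
    proof (rule ccontr)
      assume "h \<alpha> \<noteq> 0"
      then have vars: "in_vars d \<alpha>" and "mdeg d \<alpha> \<le> m"
        using h by (auto simp: skpolys_iff supp_def total_deg_le_def)
      moreover have "j < d"
        using vars j(2) unfolding in_vars_def by (meson leI)
      ultimately show False
        using add_le_mdeg[of j d "d - 1" \<alpha>] d j last by simp
    qed
    then show ?thesis using False by simp
  qed
qed

lemma monic_in_last_inverse_mult:
  assumes d: "d \<ge> 1" and g: "g \<in> skpolys d" "total_deg_le m g" and top: "g (last_power m) \<noteq> 0"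
  shows "monic_in_last d (skp_mult \<sigma> d (skp_const (inverse (g (last_power m)))) g)"
    (is "monic_in_last d ?h")
proof (rule monic_in_last_if_coeff_last_power[OF d])
  have h: "?h \<gamma> = inverse (g (last_power m)) * g \<gamma>" for \<gamma>
    by (simp add: skp_mult_const)
  then have "supp ?h \<subseteq> supp g"
    by (auto simp: supp_def)
  then show "?h \<in> skpolys d"
    using g(1) by (auto simp: skpolys_iff intro: finite_subset)
  show "total_deg_le m ?h"
    using g(2) by (simp add: h total_deg_le_def)
  show "?h (last_power m) = 1"
    using top by (simp add: h)
qed

end

theorem lemma3p5:
  fixes \<sigma> :: "'a::division_ring \<Rightarrow> 'a" and d :: nat and f :: "(nat \<Rightarrow> nat) \<Rightarrow> 'a"
  assumes "ring_aut \<sigma>"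
    and "infinite (centre_fixed \<sigma>)"
    and "d \<ge> 1"
    and "f \<in> skpolys d"
    and "f \<noteq> skp_zero"
  shows "\<exists>a (as :: nat \<Rightarrow> 'a). (\<forall>i<d - 1. as i \<in> centre_fixed \<sigma>) \<and>
           (\<exists>\<phi>. skp_subst_hom \<sigma> d as \<phi> \<and>
                 monic_in_last d (skp_mult \<sigma> d (skp_const a) (\<phi> f)))"
proof -
  interpret skew_poly_ring \<sigma> d
    using assms(1) by unfold_locales
  obtain b m where b: "\<forall>j. b j \<in> centre_fixed \<sigma>" and deg: "total_deg_le m f"
    and top: "top_eval b m f \<noteq> 0"
    using exists_point_top_eval_nonzero[OF assms(2) _ assms(3-5)] by (auto simp: centre_fixed_iff)
  define \<phi> where "\<phi> = subst_upto b (d - 1)"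
  have b_central: "\<And>j. central (b j) \<and> \<sigma> (b j) = b j"
    using b by (simp add: centre_fixed_iff)
  have hom: "skp_subst_hom \<sigma> d b \<phi>"
    unfolding \<phi>_def using b_central by (rule skp_subst_hom_subst_upto)
  have "\<phi> f \<in> skpolys d" "total_deg_le m (\<phi> f)"
    unfolding \<phi>_def using assms(4) deg by (auto intro: subst_upto_skpolys total_deg_le_subst_upto)
  moreover have "\<phi> f (last_power m) \<noteq> 0"
    unfolding \<phi>_def using coeff_subst_upto_last_power assms(3,4) b_central top by simp
  ultimately have "monic_in_last d (skp_mult \<sigma> d (skp_const (inverse (\<phi> f (last_power m)))) (\<phi> f))"
    using monic_in_last_inverse_mult assms(3) by blast
  then show ?thesis
    using hom b by blast
qed

end
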